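(* For every integer $n\ge 0$, $$x\prod_{i=0}^{n}\bigl(1+tx^{2^{i}}+x^{2^{i+1}}\bigr)=\sum_{i=1}^{2^{n+1}}\Bigl(B_i(t)+B_{2^{n+1}-i}(t)\,x^{2^{n+1}}\Bigr)x^{i}$$ as an identity in $\mathbb{Z}[t,x]$.
   Context: The Stern polynomials $B_n(t)\in\mathbb{Z}[t]$, $n\ge 0$, are defined by $B_0(t)=0$, $B_1(t)=1$, $B_{2n}(t)=tB_n(t)$ and $B_{2n+1}(t)=B_n(t)+B_{n+1}(t)$ for $n\ge 1$. *)

theory Defs
  imports "HOL-Computational_Algebra.Polynomial"
begin

function stern_poly :: "nat \<Rightarrow> int poly" where
  "stern_poly n =
     (if n = 0 then 0
      else if n = 1 then 1
      else if even n then [:0, 1:] * stern_poly (n div 2)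
      else stern_poly (n div 2) + stern_poly (n div 2 + 1))"
  by auto
termination
  by (relation "measure id") (auto elim!: oddE)

text \<open>Z[t,x] is represented as (Z[t])[x], i.e. int poly poly:
  the outer variable is x, the inner variable is t.\<close>

definition var_x :: "int poly poly" where
  "var_x = [:0, 1:]"

definition var_t :: "int poly poly" where
  "var_t = [:[:0, 1:]:]"

end

theory Submission
  imports Defs
begin

(* Write M = 2^(n+1) and let c_M(j) = B_min(j, 2M-j) be the Stern
   polynomials up to index M reflected about M (so c_M(0) = c_M(2M) = 0).  The
   recursion of the Stern polynomials gives, for every M,
     c_2M(2k) = t c_M(k)        and        c_2M(2k+1) = c_M(k) + c_M(k+1).
   Consequently the generating polynomial S_M(y) = sum_(j<2M) c_M(j+1) y^j satisfies
     (1 + t y + y^2) S_M(y^2) = S_2M(y),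
   and since S_1 = 1, induction gives prod_(i<m) (1 + t y^(2^i) + y^(2^(i+1))) = S_(2^m)(y).
   Multiplying by x and splitting the exponent range 1..2M at M turns x S_M(x) into the
   right-hand side of the theorem, because c_M(i) = B_i and c_M(M+i) = B_(M-i) for i <= M.
   Polynomials in t are embedded into Z[t][x] as constants [:p:]; var_t is the image of t. *)

text \<open>The defining equation matches every argument and would make simp loop, so it is kept out
  of the simp set and replaced by the four recursion rules below.\<close>

declare stern_poly.simps [simp del]

lemma stern_poly_0 [simp]: "stern_poly 0 = 0"
  by (simp add: stern_poly.simps)

lemma stern_poly_1 [simp]: "stern_poly (Suc 0) = 1"
  by (simp add: stern_poly.simps)

lemma stern_poly_even: "stern_poly (2 * m) = [:0, 1:] * stern_poly m"
  by (cases "m = 0") (simp_all add: stern_poly.simps [of "2 * m"])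

lemma stern_poly_odd: "stern_poly (2 * m + 1) = stern_poly m + stern_poly (m + 1)"
proof (cases "m = 0")
  case False
  then show ?thesis
    by (subst stern_poly.simps) simp
qed simp

definition stern_mirror :: "nat \<Rightarrow> nat \<Rightarrow> int poly" where
  "stern_mirror M j = stern_poly (min j (2 * M - j))"

lemma stern_mirror_0 [simp]: "stern_mirror M 0 = 0"
  by (simp add: stern_mirror_def)

lemma stern_mirror_end [simp]: "stern_mirror M (2 * M) = 0"
  by (simp add: stern_mirror_def)

lemma stern_mirror_low: "i \<le> M \<Longrightarrow> stern_mirror M i = stern_poly i"
  by (simp add: stern_mirror_def)

lemma stern_mirror_high: "i \<le> M \<Longrightarrow> stern_mirror M (M + i) = stern_poly (M - i)"
  by (simp add: stern_mirror_def)

lemma stern_mirror_double_even: "stern_mirror (2 * M) (2 * k) = [:0, 1:] * stern_mirror M k"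
proof -
  have "min (2 * k) (2 * (2 * M) - 2 * k) = 2 * min k (2 * M - k)"
    by simp
  then show ?thesis
    by (simp add: stern_mirror_def stern_poly_even)
qed

text \<open>The odd-index rule as well: on the reflected half the two summands trade places.\<close>

lemma stern_mirror_double_odd:
  "stern_mirror (2 * M) (2 * k + 1) = stern_mirror M k + stern_mirror M (k + 1)"
proof (cases "k < M")
  case True
  then show ?thesis
    using stern_poly_odd [of k] by (simp add: stern_mirror_def min_def)
next
  case False
  show ?thesis
  proof (cases "k < 2 * M")
    case True
    define r where "r = 2 * M - k - 1"
    with \<open>\<not> k < M\<close> True have "min (2 * k + 1) (2 * (2 * M) - (2 * k + 1)) = 2 * r + 1"
      "min k (2 * M - k) = r + 1" "min (k + 1) (2 * M - (k + 1)) = r"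
      by auto
    then show ?thesis
      using stern_poly_odd [of r] by (simp add: stern_mirror_def add.commute)
  next
    case False
    then show ?thesis
      by (simp add: stern_mirror_def)
  qed
qed

definition stern_gen :: "nat \<Rightarrow> int poly poly \<Rightarrow> int poly poly" where
  "stern_gen M y = (\<Sum>j<2 * M. [:stern_mirror M (j + 1):] * y ^ j)"

text \<open>For M = 1 the reflected sequence is 0, 1, 0, so S_1 = 1: the empty product.\<close>

lemma stern_gen_1: "stern_gen 1 y = 1"
  by (simp add: stern_gen_def stern_mirror_def numeral_2_eq_2 one_pCons)

text \<open>Since the reflected sequence vanishes at both ends, shifting its index by one
  amounts to multiplying the generating polynomial by the variable.\<close>

lemma stern_gen_shift: "(\<Sum>k<2 * M. [:stern_mirror M k:] * z ^ k) = z * stern_gen M z"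
proof -
  have "(\<Sum>k<2 * M. [:stern_mirror M k:] * z ^ k) = (\<Sum>k<Suc (2 * M). [:stern_mirror M k:] * z ^ k)"
    by simp
  also have "\<dots> = (\<Sum>k<2 * M. [:stern_mirror M (Suc k):] * z ^ Suc k)"
    unfolding sum.lessThan_Suc_shift by simp
  also have "\<dots> = z * stern_gen M z"
    by (simp add: stern_gen_def sum_distrib_left ac_simps)
  finally show ?thesis .
qed

lemma sum_lessThan_double:
  fixes L :: nat
  shows "(\<Sum>j<2 * L. g j) = (\<Sum>k<L. g (2 * k)) + (\<Sum>k<L. g (2 * k + 1) :: 'a :: comm_monoid_add)"
  by (induction L) (simp_all add: algebra_simps)

lemma const_add: "[:a + b:] = [:a:] + [:b:]"
  for a b :: "'a :: comm_monoid_add"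
  by simp

lemma const_var_t: "[:[:0, 1:] * p:] = var_t * [:p:]"
  by (simp add: var_t_def)

lemma stern_gen_double:
  "(1 + var_t * y + y ^ 2) * stern_gen M (y ^ 2) = stern_gen (2 * M) y"
proof -
  let ?c = "stern_mirror M" and ?c2 = "stern_mirror (2 * M)" and ?z = "y ^ 2"
  have "(\<Sum>k<2 * M. [:?c2 (2 * k + 1):] * y ^ (2 * k))
      = (\<Sum>k<2 * M. [:?c k:] * ?z ^ k) + (\<Sum>k<2 * M. [:?c (k + 1):] * ?z ^ k)"
    unfolding stern_mirror_double_odd power_mult const_add distrib_right sum.distrib ..
  then have even_part:
    "(\<Sum>k<2 * M. [:?c2 (2 * k + 1):] * y ^ (2 * k)) = ?z * stern_gen M ?z + stern_gen M ?z"
    unfolding stern_gen_shift stern_gen_def .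
  have odd_part: "(\<Sum>k<2 * M. [:?c2 (2 * k + 1 + 1):] * y ^ (2 * k + 1)) = var_t * y * stern_gen M ?z"
  proof -
    have "[:?c2 (2 * k + 1 + 1):] * y ^ (2 * k + 1) = var_t * y * ([:?c (k + 1):] * ?z ^ k)" for k
    proof -
      have "2 * k + 1 + 1 = 2 * (k + 1)"
        by simp
      then have "[:?c2 (2 * k + 1 + 1):] = var_t * [:?c (k + 1):]"
        by (simp only: stern_mirror_double_even const_var_t)
      then show ?thesis
        by (simp only: power_add power_mult power_one_right) (simp only: ac_simps)
    qed
    then show ?thesis
      unfolding stern_gen_def sum_distrib_left by simp
  qed
  have "stern_gen (2 * M) y
      = (\<Sum>k<2 * M. [:?c2 (2 * k + 1):] * y ^ (2 * k))
        + (\<Sum>k<2 * M. [:?c2 (2 * k + 1 + 1):] * y ^ (2 * k + 1))"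
    unfolding stern_gen_def by (rule sum_lessThan_double)
  also have "\<dots> = (1 + var_t * y + y ^ 2) * stern_gen M ?z"
    unfolding even_part odd_part by (simp add: algebra_simps)
  finally show ?thesis ..
qed

lemma stern_product:
  "(\<Prod>i<m. 1 + var_t * y ^ (2 ^ i) + y ^ (2 ^ (i + 1))) = stern_gen (2 ^ m) y"
proof (induction m arbitrary: y)
  case 0
  then show ?case
    using stern_gen_1 by simp
next
  case (Suc m)
  txt \<open>Peeling off the factor i = 0 leaves the same product in the variable y^2.\<close>
  have factor: "1 + var_t * y ^ (2 ^ Suc i) + y ^ (2 ^ (Suc i + 1))
      = 1 + var_t * (y ^ 2) ^ (2 ^ i) + (y ^ 2) ^ (2 ^ (i + 1))" for i
  proof -
    have "(2::nat) ^ Suc i = 2 * 2 ^ i" "(2::nat) ^ (Suc i + 1) = 2 * 2 ^ (i + 1)"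
      by simp_all
    then show ?thesis
      by (simp only: power_mult)
  qed
  have "(\<Prod>i<Suc m. 1 + var_t * y ^ (2 ^ i) + y ^ (2 ^ (i + 1)))
      = (1 + var_t * y + y ^ 2) * (\<Prod>i<m. 1 + var_t * (y ^ 2) ^ (2 ^ i) + (y ^ 2) ^ (2 ^ (i + 1)))"
    unfolding prod.lessThan_Suc_shift factor by simp
  also have "\<dots> = stern_gen (2 ^ Suc m) y"
    unfolding Suc.IH stern_gen_double power_Suc ..
  finally show ?case .
qed

lemma var_times_stern_gen: "y * stern_gen M y = (\<Sum>i = 1..2 * M. [:stern_mirror M i:] * y ^ i)"
  by (simp add: stern_gen_def sum.atLeast1_atMost_eq sum_distrib_left ac_simps)

lemma sum_atLeast1_double:
  fixes M :: nat and g :: "nat \<Rightarrow> 'a :: comm_monoid_add"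
  shows "(\<Sum>i = 1..2 * M. g i) = (\<Sum>i = 1..M. g i) + (\<Sum>i = 1..M. g (M + i))"
proof -
  have "(\<Sum>i = 1..2 * M. g i) = (\<Sum>i = 1..M. g i) + (\<Sum>i = M + 1..M + M. g i)"
    unfolding mult_2 by (rule sum.ub_add_nat) simp
  also have "(\<Sum>i = M + 1..M + M. g i) = (\<Sum>i = 1..M. g (M + i))"
    using sum.atLeastAtMost_shift_bounds [of g 1 M M] by (simp add: comp_def add.commute)
  finally show ?thesis .
qed

lemma stern_mirror_sum_split:
  "(\<Sum>i = 1..2 * M. [:stern_mirror M i:] * y ^ i)
    = (\<Sum>i = 1..M. ([:stern_poly i:] + [:stern_poly (M - i):] * y ^ M) * y ^ i)"
proof -
  have "[:stern_mirror M i:] * y ^ i + [:stern_mirror M (M + i):] * y ^ (M + i)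
      = ([:stern_poly i:] + [:stern_poly (M - i):] * y ^ M) * y ^ i" if "i \<in> {1..M}" for i
    using that by (simp add: stern_mirror_low stern_mirror_high distrib_right power_add mult.assoc)
  then show ?thesis
    unfolding sum_atLeast1_double sum.distrib [symmetric] by (rule sum.cong [OF refl])
qed

theorem theorem3p2:
  fixes n :: nat
  shows "var_x * (\<Prod>i = 0..n. 1 + var_t * var_x ^ (2 ^ i) + var_x ^ (2 ^ (i + 1)))
       = (\<Sum>i = 1..2 ^ (n + 1).
            ([:stern_poly i:] + [:stern_poly (2 ^ (n + 1) - i):] * var_x ^ (2 ^ (n + 1)))
              * var_x ^ i)"
proof -
  have "(\<Prod>i = 0..n. 1 + var_t * var_x ^ (2 ^ i) + var_x ^ (2 ^ (i + 1))) = stern_gen (2 ^ (n + 1)) var_x"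
    unfolding atLeast0AtMost lessThan_Suc_atMost [symmetric] Suc_eq_plus1 by (rule stern_product)
  then show ?thesis
    by (simp only: var_times_stern_gen stern_mirror_sum_split)
qed

end
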